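(* For each $t=0,\ldots,T$ and each node $\mu\in\Omega_t$, the set $\mathcal{Z}^{\mathrm{bd}\mu}_t$ from the construction in the context is a polyhedral convex set whose recession cone is $\mathcal{Q}^\mu_t$.
   Context: Finite filtered probability space $(\Omega,\mathcal{F},\mathbb{P};(\mathcal{F}_t)_{t=0}^T)$, $\mathcal{F}_0$ trivial, $\mathcal{F}_T=2^\Omega$, $\mathbb{P}(\{\omega\})>0$. $\Omega_t$: atoms (nodes) of $\mathcal{F}_t$; $\mathrm{succ}\,\mu=\{\nu\in\Omega_{t+1}:\nu\subseteq\mu\}$. $\mathcal{L}_t$: $\mathcal{F}_t$-measurable $\mathbb{R}^d$-valued random variables. $d$ assets, $\mathcal{F}_t$-measurable exchange rates $\pi^{jk}_t>0$, $\pi^{jj}_t=1$. $\mathcal{K}^\mu_t$: convex cone generated by $e^1,\ldots,e^d$ and $\pi^{jk}_t(\mu)e^j-e^k$; $\mathcal{K}_t=\{x\in\mathcal{L}_t:x(\mu)\in\mathcal{K}^\mu_t\ \forall\mu\}$. Deferred solvency cone $\mathcal{Q}_t$: $z\in\mathcal{L}_t$ for which there exist $y_{t+1},\ldots,y_{T+1}$, $y_s\in\mathcal{L}_{s-1}$, $y_{T+1}=0$, with $z-y_{t+1}\in\mathcal{K}_t$, $y_s-y_{s+1}\in\mathcal{K}_s$ ($s=t+1,\ldots,T$); $\mathcal{Q}^\mu_t=\{z(\mu):z\in\mathcal{Q}_t\}$. American option: adapted $\mathbb{R}^d$-valued $\xi=(\xi_t)_{t=0}^T$. The recession cone of a nonempty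 convex $A\subseteq\mathbb{R}^d$ is $\{y: A+\lambda y\subseteq A\ \forall\lambda\ge0\}$. Construction (nodewise): $\mathcal{U}^{\mathrm{bd}\mu}_t=-\xi_t(\mu)+\mathcal{Q}^\mu_t$ for all $t,\mu$; for $\mu\in\Omega_T$, $\mathcal{Z}^{\mathrm{bd}\mu}_T=\mathcal{V}^{\mathrm{bd}\mu}_T=\mathcal{W}^{\mathrm{bd}\mu}_T=\mathcal{U}^{\mathrm{bd}\mu}_T$; backwards for $t<T$, $\mu\in\Omega_t$: $\mathcal{W}^{\mathrm{bd}\mu}_t=\bigcap_{\nu\in\mathrm{succ}\,\mu}\mathcal{Z}^{\mathrm{bd}\nu}_{t+1}$, $\mathcal{V}^{\mathrm{bd}\mu}_t=\mathcal{W}^{\mathrm{bd}\mu}_t+\mathcal{Q}^\mu_t$, $\mathcal{Z}^{\mathrm{bd}\mu}_t=\mathrm{conv}\{\mathcal{U}^{\mathrm{bd}\mu}_t,\mathcal{V}^{\mathrm{bd}\mu}_t\}$ (the smallest convex set containing both). Standing assumption: no arbitrage (no predictable $y$ with $y_0=0$, $y_{T+1}=0$, $y_t-y_{t+1}\in\mathcal{K}_t$ for $t<T$ and $y_T-x\in\mathcal{K}_T$ for a nonzero componentwise non-negative $x\in\mathcal{L}_T$). *)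

theory Defs
  imports "HOL-Analysis.Analysis"
begin

text \<open>Finite filtration given by the sequence of partitions A t (the atoms / nodes Omega_t).\<close>

definition is_partition :: "'w set \<Rightarrow> 'w set set \<Rightarrow> bool" where
  "is_partition \<Omega> P \<longleftrightarrow> (\<forall>\<mu>\<in>P. \<mu> \<noteq> {} \<and> \<mu> \<subseteq> \<Omega>) \<and> \<Union>P = \<Omega> \<and>
     (\<forall>\<mu>\<in>P. \<forall>\<nu>\<in>P. \<mu> \<noteq> \<nu> \<longrightarrow> \<mu> \<inter> \<nu> = {})"

definition finite_filtration :: "'w set \<Rightarrow> (nat \<Rightarrow> 'w set set) \<Rightarrow> nat \<Rightarrow> bool" where
  "finite_filtration \<Omega> A T \<longleftrightarrow> finite \<Omega> \<and> \<Omega> \<noteq> {} \<and>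
     (\<forall>t\<le>T. is_partition \<Omega> (A t)) \<and>
     (\<forall>t<T. \<forall>\<nu>\<in>A (Suc t). \<exists>\<mu>\<in>A t. \<nu> \<subseteq> \<mu>) \<and>
     A 0 = {\<Omega>} \<and> A T = (\<lambda>\<omega>. {\<omega>}) ` \<Omega>"

definition meas :: "(nat \<Rightarrow> 'w set set) \<Rightarrow> nat \<Rightarrow> ('w \<Rightarrow> 'b) \<Rightarrow> bool" where
  "meas A t x \<longleftrightarrow> (\<forall>\<mu>\<in>A t. \<forall>\<omega>\<in>\<mu>. \<forall>\<omega>'\<in>\<mu>. x \<omega> = x \<omega>')"

definition nodeval :: "('w \<Rightarrow> 'b) \<Rightarrow> 'w set \<Rightarrow> 'b" where
  "nodeval x \<mu> = x (SOME \<omega>. \<omega> \<in> \<mu>)"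

definition succ :: "(nat \<Rightarrow> 'w set set) \<Rightarrow> nat \<Rightarrow> 'w set \<Rightarrow> 'w set set" where
  "succ A t \<mu> = {\<nu> \<in> A (Suc t). \<nu> \<subseteq> \<mu>}"

definition Kcone :: "(nat \<Rightarrow> 'w \<Rightarrow> 'd::finite \<Rightarrow> 'd \<Rightarrow> real) \<Rightarrow> nat \<Rightarrow> 'w \<Rightarrow> (real^'d) set" where
  "Kcone \<pi> t \<omega> = convex_cone hull
     ({axis j 1 | j. True} \<union> {\<pi> t \<omega> j k *\<^sub>R axis j 1 - axis k 1 | j k. True})"

definition Kset :: "'w set \<Rightarrow> (nat \<Rightarrow> 'w set set) \<Rightarrow> (nat \<Rightarrow> 'w \<Rightarrow> 'd::finite \<Rightarrow> 'd \<Rightarrow> real) \<Rightarrow> nat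
    \<Rightarrow> ('w \<Rightarrow> real^'d) set" where
  "Kset \<Omega> A \<pi> t = {x. meas A t x \<and> (\<forall>\<omega>\<in>\<Omega>. x \<omega> \<in> Kcone \<pi> t \<omega>)}"

definition Qset :: "'w set \<Rightarrow> (nat \<Rightarrow> 'w set set) \<Rightarrow> (nat \<Rightarrow> 'w \<Rightarrow> 'd::finite \<Rightarrow> 'd \<Rightarrow> real) \<Rightarrow> nat \<Rightarrow> nat
    \<Rightarrow> ('w \<Rightarrow> real^'d) set" where
  "Qset \<Omega> A \<pi> T t = {z. meas A t z \<and>
     (\<exists>y :: nat \<Rightarrow> 'w \<Rightarrow> real^'d.
        (\<forall>s\<in>{Suc t..Suc T}. meas A (s - 1) (y s)) \<and>
        (\<forall>\<omega>\<in>\<Omega>. y (Suc T) \<omega> = 0) \<and>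
        (\<lambda>\<omega>. z \<omega> - y (Suc t) \<omega>) \<in> Kset \<Omega> A \<pi> t \<and>
        (\<forall>s\<in>{Suc t..T}. (\<lambda>\<omega>. y s \<omega> - y (Suc s) \<omega>) \<in> Kset \<Omega> A \<pi> s))}"

definition Qnode :: "'w set \<Rightarrow> (nat \<Rightarrow> 'w set set) \<Rightarrow> (nat \<Rightarrow> 'w \<Rightarrow> 'd::finite \<Rightarrow> 'd \<Rightarrow> real) \<Rightarrow> nat \<Rightarrow> nat
    \<Rightarrow> 'w set \<Rightarrow> (real^'d) set" where
  "Qnode \<Omega> A \<pi> T t \<mu> = (\<lambda>z. nodeval z \<mu>) ` Qset \<Omega> A \<pi> T t"

definition no_arbitrage :: "'w set \<Rightarrow> (nat \<Rightarrow> 'w set set) \<Rightarrow> (nat \<Rightarrow> 'w \<Rightarrow> 'd::finite \<Rightarrow> 'd \<Rightarrow> real) \<Rightarrow> nat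
    \<Rightarrow> bool" where
  "no_arbitrage \<Omega> A \<pi> T \<longleftrightarrow> \<not> (\<exists>(y :: nat \<Rightarrow> 'w \<Rightarrow> real^'d) x.
      (\<forall>\<omega>\<in>\<Omega>. y 0 \<omega> = 0) \<and>
      (\<forall>s\<in>{1..Suc T}. meas A (s - 1) (y s)) \<and>
      (\<forall>\<omega>\<in>\<Omega>. y (Suc T) \<omega> = 0) \<and>
      (\<forall>t<T. (\<lambda>\<omega>. y t \<omega> - y (Suc t) \<omega>) \<in> Kset \<Omega> A \<pi> t) \<and>
      meas A T x \<and> (\<forall>\<omega>\<in>\<Omega>. \<forall>j. 0 \<le> x \<omega> $ j) \<and> (\<exists>\<omega>\<in>\<Omega>. x \<omega> \<noteq> 0) \<and>
      (\<lambda>\<omega>. y T \<omega> - x \<omega>) \<in> Kset \<Omega> A \<pi> T)"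

definition Ubd :: "'w set \<Rightarrow> (nat \<Rightarrow> 'w set set) \<Rightarrow> (nat \<Rightarrow> 'w \<Rightarrow> 'd::finite \<Rightarrow> 'd \<Rightarrow> real) \<Rightarrow> nat
    \<Rightarrow> (nat \<Rightarrow> 'w \<Rightarrow> real^'d) \<Rightarrow> nat \<Rightarrow> 'w set \<Rightarrow> (real^'d) set" where
  "Ubd \<Omega> A \<pi> T \<xi> t \<mu> = (\<lambda>q. - nodeval (\<xi> t) \<mu> + q) ` Qnode \<Omega> A \<pi> T t \<mu>"

text \<open>Backward recursion; Zaux n t mu is Z^{bd mu}_t when n = T - t.\<close>
fun Zaux :: "'w set \<Rightarrow> (nat \<Rightarrow> 'w set set) \<Rightarrow> (nat \<Rightarrow> 'w \<Rightarrow> 'd::finite \<Rightarrow> 'd \<Rightarrow> real) \<Rightarrow> nat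
    \<Rightarrow> (nat \<Rightarrow> 'w \<Rightarrow> real^'d) \<Rightarrow> nat \<Rightarrow> nat \<Rightarrow> 'w set \<Rightarrow> (real^'d) set" where
  "Zaux \<Omega> A \<pi> T \<xi> 0 t \<mu> = Ubd \<Omega> A \<pi> T \<xi> t \<mu>"
| "Zaux \<Omega> A \<pi> T \<xi> (Suc n) t \<mu> =
     (let W = (\<Inter>\<nu>\<in>succ A t \<mu>. Zaux \<Omega> A \<pi> T \<xi> n (Suc t) \<nu>);
          V = {w + q | w q. w \<in> W \<and> q \<in> Qnode \<Omega> A \<pi> T t \<mu>}
      in convex hull (Ubd \<Omega> A \<pi> T \<xi> t \<mu> \<union> V))"

definition Zbd :: "'w set \<Rightarrow> (nat \<Rightarrow> 'w set set) \<Rightarrow> (nat \<Rightarrow> 'w \<Rightarrow> 'd::finite \<Rightarrow> 'd \<Rightarrow> real) \<Rightarrow> nat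
    \<Rightarrow> (nat \<Rightarrow> 'w \<Rightarrow> real^'d) \<Rightarrow> nat \<Rightarrow> 'w set \<Rightarrow> (real^'d) set" where
  "Zbd \<Omega> A \<pi> T \<xi> t \<mu> = Zaux \<Omega> A \<pi> T \<xi> (T - t) t \<mu>"

definition recession_cone :: "'a::real_vector set \<Rightarrow> 'a set" where
  "recession_cone S = {y. \<forall>c::real\<ge>0. \<forall>a\<in>S. a + c *\<^sub>R y \<in> S}"

end

theory Submission
  imports Defs
begin

text \<open>By backward induction, Z_t(\<mu>) = conv F + Q_t(\<mu>) for a finite nonempty F. Pasting
  liquidation strategies of the successor nodes gives Q_t(\<mu>) = K_t(\<mu>) + \<Inter>_\<nu> Q_t+1(\<nu>), so all
  deferred solvency cones are polyhedral cones containing the nonnegative orthant. In the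
  induction step W = \<Inter>_\<nu> Z_t+1(\<nu>) is a polyhedron, nonempty because a large positive vector lies
  in every U_t+1(\<nu>). By Minkowski--Weyl W = conv F_W + cone G; every g \<in> G is a recession
  direction of each Z_t+1(\<nu>), hence lies in \<Inter>_\<nu> Q_t+1(\<nu>) \<subseteq> Q_t(\<mu>) and is absorbed in
  W + Q_t(\<mu>). Finally, conv F + Q is a polyhedron with recession cone Q.\<close>

section \<open>Polyhedra and finitely generated cones\<close>

lemma convex_cone_sum:
  assumes "convex_cone C" "\<And>i. i \<in> I \<Longrightarrow> f i \<in> C"
  shows "sum f I \<in> C"
  using assms(2)
proof (induction I rule: infinite_finite_induct)
  case (insert i I)
  then show ?case using assms(1) by (simp add: convex_cone_add)
qed (use assms(1) convex_cone_contains_0 in simp_all)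

lemma set_plus_eq_Collect: "{a + b |a b. a \<in> A \<and> b \<in> B} = A + B"
  by (auto simp: set_plus_def)

lemma convex_cone_set_plus: "convex_cone C \<Longrightarrow> convex_cone D \<Longrightarrow> convex_cone (C + D)"
proof -
  have "C + D = (\<Union>x\<in>C. \<Union>y\<in>D. {x + y})"
    by (auto simp: set_plus_def)
  then show "convex_cone C \<Longrightarrow> convex_cone D \<Longrightarrow> convex_cone (C + D)"
    by (simp add: convex_cone_sums)
qed

lemma convex_cone_plus_absorb:
  assumes "convex_cone C" "Y \<subseteq> C" "0 \<in> Y"
  shows "Y + C = C"
proof
  show "Y + C \<subseteq> C"
    using assms by (auto simp: set_plus_def intro: convex_cone_add)
  show "C \<subseteq> Y + C"
    using assms(3) by (force simp: set_plus_def)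
qed

lemma convex_cone_hull_Un_plus: "convex_cone hull (S \<union> T) = convex_cone hull S + convex_cone hull T"
  unfolding convex_cone_hull_Un by (auto simp: set_plus_def)

text \<open>The intersection with the cube [-1,1]^n is a polytope, whose vertices generate the cone.\<close>

lemma polyhedral_convex_cone_finitely_generated:
  fixes C :: "'a::euclidean_space set"
  assumes "polyhedron C" "convex_cone C"
  obtains G where "finite G" "C = convex_cone hull G"
proof -
  define B :: "'a set" where "B = cbox (-One) One"
  have "polytope (C \<inter> B)"
    using assms(1) by (simp add: B_def polytope_eq_bounded_polyhedron bounded_Int)
  then obtain V where V: "finite V" "C \<inter> B = convex hull V"
    unfolding polytope_def by blast
  have "C \<subseteq> convex_cone hull V"
  proof
    fix x assume x: "x \<in> C"
    show "x \<in> convex_cone hull V"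
    proof (cases "x = 0")
      case True
      then show ?thesis by (simp add: convex_cone_hull_contains_0)
    next
      case False
      define c where "c = 1 / norm x"
      have c: "c > 0" using False by (simp add: c_def)
      have "\<bar>(c *\<^sub>R x) \<bullet> i\<bar> \<le> 1" if "i \<in> Basis" for i
        using Basis_le_norm[OF that, of "c *\<^sub>R x"] False by (simp add: c_def)
      then have "c *\<^sub>R x \<in> B"
        unfolding B_def mem_box by (simp add: inner_sum_Basis abs_le_iff)
      moreover have "c *\<^sub>R x \<in> C" using x c assms(2) by (simp add: convex_cone_scaleR)
      ultimately have "c *\<^sub>R x \<in> convex_cone hull V"
        using V(2) convex_hull_subset_convex_cone_hull by blast
      then have "(1/c) *\<^sub>R (c *\<^sub>R x) \<in> convex_cone hull V"
        by (rule convex_cone_hull_mul) (use c in simp)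
      then show ?thesis using c by simp
    qed
  qed
  moreover have "convex_cone hull V \<subseteq> C"
    using V(2) assms(2) by (intro hull_minimal) (auto dest: hull_subset[of V convex, THEN subsetD])
  ultimately show thesis using that V(1) by blast
qed

lemma snd_convex_hull_const:
  fixes P :: "('a::euclidean_space \<times> real) set"
  assumes "\<forall>p\<in>P. snd p = s" "q \<in> convex hull P"
  shows "snd q = s"
proof -
  have "{q::'a \<times> real. snd q = s} = {q. (0, 1) \<bullet> q = s}"
    by (auto simp: inner_prod_def)
  then have "convex {q::'a \<times> real. snd q = s}"
    by (metis convex_hyperplane)
  then have "convex hull P \<subseteq> {q. snd q = s}"
    using assms(1) by (intro hull_minimal) auto
  then show ?thesis using assms(2) by blast
qed

lemma snd_convex_cone_hull_zero:
  fixes N :: "('a::euclidean_space \<times> real) set"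
  assumes "\<forall>n\<in>N. snd n = 0" "q \<in> convex_cone hull N"
  shows "snd q = 0"
proof -
  have "convex_cone hull N \<subseteq> {q. snd q = 0}"
    using assms(1) by (intro hull_minimal) (auto simp: convex_cone_iff)
  then show ?thesis using assms(2) by blast
qed

lemma convex_cone_hull_at_height_one:
  fixes P :: "('a::euclidean_space \<times> real) set"
  assumes "\<forall>p\<in>P. snd p = 1" "p \<in> convex_cone hull P" "snd p = 1"
  shows "p \<in> convex hull P"
proof -
  have "P \<noteq> {}" using assms(2,3) by auto
  then have "p \<in> conic hull (convex hull P)"
    using assms(2) by (simp add: convex_cone_hull_separate_nonempty)
  then obtain c h where "0 \<le> c" "h \<in> convex hull P" "p = c *\<^sub>R h"
    unfolding conic_hull_explicit by blast
  moreover from this have "c = 1"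
    using snd_convex_hull_const[OF assms(1)] assms(3) by auto
  ultimately show ?thesis by simp
qed

lemma convex_cone_hull_slice_at_one:
  fixes P N :: "('a::euclidean_space \<times> real) set"
  assumes P1: "\<forall>p\<in>P. snd p = 1" and N0: "\<forall>n\<in>N. snd n = 0"
  shows "{x. (x, 1) \<in> convex_cone hull (P \<union> N)} = convex hull (fst ` P) + convex_cone hull (fst ` N)"
proof (intro equalityI subsetI)
  fix x assume "x \<in> {x. (x, 1) \<in> convex_cone hull (P \<union> N)}"
  then obtain p n where p: "p \<in> convex_cone hull P" and n: "n \<in> convex_cone hull N"
    and xpn: "(x, 1) = p + n"
    by (auto simp: convex_cone_hull_Un)
  have "snd p = 1"
    using snd_convex_cone_hull_zero[OF N0 n] arg_cong[OF xpn, of snd] by simp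
  then have "fst p \<in> convex hull (fst ` P)"
    using convex_cone_hull_at_height_one[OF P1 p]
    by (metis convex_hull_linear_image image_eqI linear_fst)
  moreover have "fst n \<in> convex_cone hull (fst ` N)"
    using n by (simp add: convex_cone_hull_linear_image linear_fst)
  moreover have "x = fst p + fst n" using arg_cong[OF xpn, of fst] by simp
  ultimately show "x \<in> convex hull (fst ` P) + convex_cone hull (fst ` N)" by blast
next
  fix x assume "x \<in> convex hull (fst ` P) + convex_cone hull (fst ` N)"
  then obtain p n where x: "x = fst p + fst n" and p: "p \<in> convex hull P"
    and n: "n \<in> convex_cone hull N"
    by (auto simp: set_plus_def convex_hull_linear_image[OF linear_fst, symmetric]
        convex_cone_hull_linear_image[OF linear_fst])
  have "(x, 1) = p + n"
    using snd_convex_hull_const[OF P1 p] snd_convex_cone_hull_zero[OF N0 n]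
    by (simp add: prod_eq_iff x)
  moreover have "p \<in> convex_cone hull (P \<union> N)"
    using p convex_hull_subset_convex_cone_hull hull_mono[of P "P \<union> N" convex_cone] by blast
  moreover have "n \<in> convex_cone hull (P \<union> N)"
    using n hull_mono[of N "P \<union> N" convex_cone] by blast
  ultimately show "x \<in> {x. (x, 1) \<in> convex_cone hull (P \<union> N)}"
    by (simp add: convex_cone_hull_add)
qed

lemma polyhedron_slice_at_one:
  fixes S :: "('a::euclidean_space \<times> real) set"
  assumes "polyhedron S"
  shows "polyhedron {x. (x, 1) \<in> S}"
proof -
  obtain F where F: "finite F" "S = \<Inter>F" and "\<forall>h\<in>F. \<exists>a b. a \<noteq> 0 \<and> h = {x. a \<bullet> x \<le> b}"
    using assms unfolding polyhedron_def by blast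
  then obtain a b where ab: "\<And>h. h \<in> F \<Longrightarrow> h = {x. a h \<bullet> x \<le> b h}"
    by metis
  have "(x, 1) \<in> h \<longleftrightarrow> fst (a h) \<bullet> x \<le> b h - snd (a h)" if "h \<in> F" for h x
    by (subst ab[OF that]) (auto simp: inner_prod_def)
  then have "{x. (x, 1) \<in> S} = (\<Inter>h\<in>F. {x. fst (a h) \<bullet> x \<le> b h - snd (a h)})"
    using F(2) by auto
  then show ?thesis
    using F(1) by (auto intro: polyhedron_halfspace_le)
qed

lemma polyhedron_convex_hull_plus_convex_cone_hull:
  fixes F G :: "'a::euclidean_space set"
  assumes "finite F" "finite G"
  shows "polyhedron (convex hull F + convex_cone hull G)"
proof -
  define P where "P = (\<lambda>f. (f, 1::real)) ` F"
  define N where "N = (\<lambda>g. (g, 0::real)) ` G"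
  have "fst ` P = F" "fst ` N = G"
    unfolding P_def N_def by (force simp: image_image)+
  then have "convex hull F + convex_cone hull G = {x. (x, 1) \<in> convex_cone hull (P \<union> N)}"
    using convex_cone_hull_slice_at_one[of P N] by (simp add: P_def N_def)
  moreover have "polyhedron (convex_cone hull (P \<union> N))"
    using assms by (intro polyhedron_convex_cone_hull) (auto simp: P_def N_def)
  ultimately show ?thesis by (simp add: polyhedron_slice_at_one)
qed

lemma convex_cone_hull_rescale:
  assumes "\<And>g. g \<in> G \<Longrightarrow> c g > 0"
  shows "convex_cone hull ((\<lambda>g. c g *\<^sub>R g) ` G) = convex_cone hull G"
proof (intro equalityI hull_minimal subsetI convex_cone_convex_cone_hull)
  fix x assume "x \<in> (\<lambda>g. c g *\<^sub>R g) ` G"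
  then obtain g where "g \<in> G" "x = c g *\<^sub>R g" by blast
  then show "x \<in> convex_cone hull G"
    using assms by (simp add: convex_cone_hull_mul hull_inc less_imp_le)
next
  fix g assume g: "g \<in> G"
  then have "(1 / c g) *\<^sub>R (c g *\<^sub>R g) \<in> convex_cone hull ((\<lambda>g. c g *\<^sub>R g) ` G)"
    using assms by (intro convex_cone_hull_mul hull_inc) (auto intro: less_imp_le)
  then show "g \<in> convex_cone hull ((\<lambda>g. c g *\<^sub>R g) ` G)"
    using assms[OF g] by simp
qed

lemma polyhedron_homogenisation:
  fixes S :: "'a::euclidean_space set"
  assumes "polyhedron S"
  obtains C :: "('a \<times> real) set" where "polyhedron C" "convex_cone C" "\<forall>p\<in>C. 0 \<le> snd p"
    "S = {x. (x, 1) \<in> C}"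
proof -
  obtain H where H: "finite H" "S = \<Inter>H" and "\<forall>h\<in>H. \<exists>a b. a \<noteq> 0 \<and> h = {x. a \<bullet> x \<le> b}"
    using assms unfolding polyhedron_def by blast
  then obtain a b where ab: "\<And>h. h \<in> H \<Longrightarrow> h = {x. a h \<bullet> x \<le> b h}"
    by metis
  define C :: "('a \<times> real) set" where
    "C = {p. 0 \<le> snd p \<and> (\<forall>h\<in>H. a h \<bullet> fst p \<le> b h * snd p)}"
  have C: "C = \<Inter> (insert {p. (0, -1) \<bullet> p \<le> 0} ((\<lambda>h. {p. (a h, - b h) \<bullet> p \<le> 0}) ` H))"
    unfolding C_def by (auto simp: inner_prod_def)
  have "polyhedron C"
    unfolding C using H(1) by (intro polyhedron_Inter) (auto intro: polyhedron_halfspace_le)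
  moreover have "convex_cone C"
    unfolding C by (intro convex_cone_Inter) (auto intro: convex_cone_halfspace_le)
  moreover have "x \<in> h \<longleftrightarrow> a h \<bullet> x \<le> b h" if "h \<in> H" for h x
    by (subst ab[OF that]) simp
  then have "S = {x. (x, 1) \<in> C}"
    using H(2) by (auto simp: C_def)
  ultimately show thesis
    using that by (auto simp: C_def)
qed

text \<open>Minkowski--Weyl: the homogenised cone of a polyhedron is finitely generated; rescaling
  its generators to height 0 or 1 and slicing at height 1 recovers the polyhedron.\<close>

lemma polyhedron_Minkowski_Weyl:
  fixes S :: "'a::euclidean_space set"
  assumes "polyhedron S" "S \<noteq> {}"
  obtains F G where "finite F" "F \<noteq> {}" "finite G" "S = convex hull F + convex_cone hull G"
proof -
  obtain C :: "('a \<times> real) set" where C: "polyhedron C" "convex_cone C" "\<forall>p\<in>C. 0 \<le> snd p"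
    and S: "S = {x. (x, 1) \<in> C}"
    using polyhedron_homogenisation[OF assms(1)] by blast
  obtain G0 where G0: "finite G0" "C = convex_cone hull G0"
    using polyhedral_convex_cone_finitely_generated[OF C(1,2)] .
  define c where "c g = (if snd g > 0 then 1 / snd g else 1)" for g :: "'a \<times> real"
  define Gpos where "Gpos = {g\<in>G0. snd g > 0}"
  define P where "P = (\<lambda>g. c g *\<^sub>R g) ` Gpos"
  define N where "N = {g\<in>G0. snd g = 0}"
  have "G0 \<subseteq> C" unfolding G0(2) by (rule hull_subset)
  then have "G0 = Gpos \<union> N"
    unfolding Gpos_def N_def using C(3) by force
  moreover have "(\<lambda>g. c g *\<^sub>R g) ` N = N"
    unfolding N_def c_def by force
  ultimately have "(\<lambda>g. c g *\<^sub>R g) ` G0 = P \<union> N"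
    unfolding P_def by (simp only: image_Un)
  moreover have "c g > 0" for g by (simp add: c_def)
  ultimately have C_eq: "C = convex_cone hull (P \<union> N)"
    using convex_cone_hull_rescale[of G0 c] G0(2) by simp
  have S: "S = convex hull (fst ` P) + convex_cone hull (fst ` N)"
    unfolding S C_eq by (rule convex_cone_hull_slice_at_one) (auto simp: P_def Gpos_def N_def c_def)
  show thesis
  proof (rule that[OF _ _ _ S])
    show "fst ` P \<noteq> {}" using assms(2) S by auto
    show "finite (fst ` P)" "finite (fst ` N)"
      using G0(1) by (simp_all add: P_def Gpos_def N_def)
  qed
qed

text \<open>The bounded part \<open>convex hull F\<close> is negligible along a ray once the ray is rescaled by
  the reciprocal of its length parameter; closedness of \<open>C\<close> then gives the limit.\<close>

lemma ray_in_convex_hull_plus_cone_imp_direction_in_cone: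
  fixes C :: "'a::euclidean_space set"
  assumes "finite F" "closed C" "convex_cone C"
    and ray: "\<And>l. l \<ge> 0 \<Longrightarrow> p + l *\<^sub>R y \<in> convex hull F + C"
  shows "y \<in> C"
proof -
  obtain M where M: "\<And>f. f \<in> convex hull F \<Longrightarrow> norm f \<le> M"
    using finite_imp_bounded_convex_hull[OF assms(1)] unfolding bounded_iff by blast
  have "\<exists>z\<in>C. dist z y < e" if e: "e > 0" for e
  proof -
    define l where "l = (norm p + \<bar>M\<bar> + 1) / e"
    have l: "l > 0" unfolding l_def using e by (simp add: add_nonneg_pos)
    obtain f c where f: "f \<in> convex hull F" and c: "c \<in> C" and eq: "p + l *\<^sub>R y = f + c"
      using ray[of l] l by (auto simp: set_plus_def)
    have "c = p + l *\<^sub>R y - f"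
      using eq by (simp add: algebra_simps)
    then have "(1/l) *\<^sub>R c - y = (1/l) *\<^sub>R (p - f)"
      using l by (simp add: scaleR_add_right scaleR_diff_right)
    then have "dist ((1/l) *\<^sub>R c) y = (1/l) * norm (p - f)"
      using l by (simp add: dist_norm)
    also have "\<dots> \<le> (1/l) * (norm p + \<bar>M\<bar>)"
      using l M[OF f] norm_triangle_ineq4[of p f] by (intro mult_left_mono) auto
    also have "\<dots> < e"
      using e l by (simp add: l_def field_simps)
    finally show ?thesis
      using c l assms(3) by (metis convex_cone_scaleR less_imp_le zero_le_divide_1_iff)
  qed
  then show ?thesis
    using closed_approachable[OF assms(2)] by blast
qed

lemma recession_cone_convex_hull_plus_cone:
  fixes C :: "'a::euclidean_space set"
  assumes "finite F" "F \<noteq> {}" "closed C" "convex_cone C"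
  shows "recession_cone (convex hull F + C) = C"
proof (intro equalityI subsetI)
  fix y assume y: "y \<in> recession_cone (convex hull F + C)"
  obtain f where "f \<in> F" using assms(2) by blast
  then have "f + 0 \<in> convex hull F + C"
    using convex_cone_contains_0[OF assms(4)] by (intro set_plus_intro hull_inc)
  then show "y \<in> C"
    using y assms(1,3,4) unfolding recession_cone_def
    by (intro ray_in_convex_hull_plus_cone_imp_direction_in_cone[of F C f]) auto
next
  fix y assume y: "y \<in> C"
  show "y \<in> recession_cone (convex hull F + C)"
    unfolding recession_cone_def
  proof (intro CollectI allI impI ballI)
    fix c :: real and x assume "c \<ge> 0" "x \<in> convex hull F + C"
    moreover from this(2) obtain f q where "f \<in> convex hull F" "q \<in> C" "x = f + q"
      by (rule set_plus_elim)
    ultimately show "x + c *\<^sub>R y \<in> convex hull F + C"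
      using y assms(4) add.assoc[of f q]
      by (metis convex_cone_add convex_cone_scaleR set_plus_intro)
  qed
qed

text \<open>The key identity is u a + v b + q = u (a + q) + v (b + q) for u + v = 1.\<close>

lemma convex_hull_Un_plus_cone:
  assumes "convex_cone C" "F \<noteq> {}"
  shows "convex hull (({a} + C) \<union> (convex hull F + C)) = convex hull (insert a F) + C"
proof
  show "convex hull (({a} + C) \<union> (convex hull F + C)) \<subseteq> convex hull (insert a F) + C"
  proof (rule hull_minimal)
    have "{a} \<subseteq> convex hull (insert a F)" "convex hull F \<subseteq> convex hull (insert a F)"
      by (simp_all add: hull_inc hull_mono subset_insertI)
    then show "({a} + C) \<union> (convex hull F + C) \<subseteq> convex hull (insert a F) + C"
      by (intro Un_least set_plus_mono2 order_refl)
    show "convex (convex hull (insert a F) + C)"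
      using assms(1) by (simp add: convex_set_plus convex_cone_def)
  qed
next
  show "convex hull (insert a F) + C \<subseteq> convex hull (({a} + C) \<union> (convex hull F + C))"
  proof
    fix x assume "x \<in> convex hull (insert a F) + C"
    then obtain c q where x: "x = c + q" and c: "c \<in> convex hull (insert a F)" and q: "q \<in> C"
      by (auto simp: set_plus_def)
    obtain u v b where uv: "0 \<le> u" "0 \<le> v" "u + v = 1" and b: "b \<in> convex hull F"
      and ce: "c = u *\<^sub>R a + v *\<^sub>R b"
      using c unfolding convex_hull_insert[OF assms(2)] by blast
    have "a + q \<in> ({a} + C) \<union> (convex hull F + C)" "b + q \<in> ({a} + C) \<union> (convex hull F + C)"
      using q b by auto
    then have "u *\<^sub>R (a + q) + v *\<^sub>R (b + q) \<in> convex hull (({a} + C) \<union> (convex hull F + C))"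
      using uv by (intro convexD[OF convex_convex_hull]) (auto intro: hull_inc)
    moreover have "u *\<^sub>R (a + q) + v *\<^sub>R (b + q) = (u *\<^sub>R a + v *\<^sub>R b) + (u + v) *\<^sub>R q"
      by (simp add: algebra_simps)
    then have "u *\<^sub>R (a + q) + v *\<^sub>R (b + q) = x"
      using uv(3) x ce by simp
    ultimately show "x \<in> convex hull (({a} + C) \<union> (convex hull F + C))" by simp
  qed
qed

lemma polyhedron_plus_polyhedral_cones:
  fixes C D :: "'a::euclidean_space set"
  assumes "polyhedron C" "convex_cone C" "polyhedron D" "convex_cone D"
  shows "polyhedron (C + D)"
proof -
  obtain G where "finite G" "C = convex_cone hull G"
    using polyhedral_convex_cone_finitely_generated[OF assms(1,2)] .
  moreover obtain H where "finite H" "D = convex_cone hull H"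
    using polyhedral_convex_cone_finitely_generated[OF assms(3,4)] .
  ultimately show ?thesis
    by (simp add: convex_cone_hull_Un_plus[symmetric] polyhedron_convex_cone_hull)
qed

lemma polyhedron_convex_hull_plus_polyhedral_cone:
  fixes C :: "'a::euclidean_space set"
  assumes "finite F" "polyhedron C" "convex_cone C"
  shows "polyhedron (convex hull F + C)"
proof -
  obtain G where "finite G" "C = convex_cone hull G"
    using polyhedral_convex_cone_finitely_generated[OF assms(2,3)] .
  then show ?thesis
    using polyhedron_convex_hull_plus_convex_cone_hull[OF assms(1)] by simp
qed

lemma convex_cone_hull_subset_if_plus_subset:
  fixes C :: "'a::euclidean_space set"
  assumes "finite F" "closed C" "convex_cone C" "P \<noteq> {}"
    and "P + convex_cone hull G \<subseteq> convex hull F + C"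
  shows "convex_cone hull G \<subseteq> C"
proof
  fix g assume g: "g \<in> convex_cone hull G"
  obtain p where "p \<in> P" using assms(4) by blast
  then have "p + l *\<^sub>R g \<in> convex hull F + C" if "l \<ge> 0" for l
    using assms(5) convex_cone_hull_mul[OF g that] by blast
  then show "g \<in> C"
    by (rule ray_in_convex_hull_plus_cone_imp_direction_in_cone[OF assms(1-3)])
qed

text \<open>One step of the backward recursion, in the abstract: the directions of unboundedness of
  the intersection lie in every \<open>C \<nu>\<close>, hence in \<open>Q\<close>, and are absorbed by \<open>Q\<close>.\<close>

lemma convex_hull_Un_Inter_plus_cone:
  fixes F C :: "'i \<Rightarrow> 'a::euclidean_space set"
  assumes "finite S" "\<And>\<nu>. \<nu> \<in> S \<Longrightarrow> finite (F \<nu>)"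
    and "\<And>\<nu>. \<nu> \<in> S \<Longrightarrow> polyhedron (C \<nu>)" "\<And>\<nu>. \<nu> \<in> S \<Longrightarrow> convex_cone (C \<nu>)"
    and "(\<Inter>\<nu>\<in>S. convex hull F \<nu> + C \<nu>) \<noteq> {}"
    and "convex_cone Q" "(\<Inter>\<nu>\<in>S. C \<nu>) \<subseteq> Q"
  obtains F' where "finite F'" "F' \<noteq> {}"
    "convex hull (({a} + Q) \<union> ((\<Inter>\<nu>\<in>S. convex hull F \<nu> + C \<nu>) + Q)) = convex hull F' + Q"
proof -
  let ?W = "\<Inter>\<nu>\<in>S. convex hull F \<nu> + C \<nu>"
  have "polyhedron ?W"
    using assms(1-4) by (auto intro!: polyhedron_Inter polyhedron_convex_hull_plus_polyhedral_cone)
  then obtain FW GW where FW: "finite FW" "FW \<noteq> {}" "finite GW"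
    and W: "?W = convex hull FW + convex_cone hull GW"
    using polyhedron_Minkowski_Weyl[OF _ assms(5)] by blast
  have "convex_cone hull GW \<subseteq> C \<nu>" if "\<nu> \<in> S" for \<nu>
  proof (rule convex_cone_hull_subset_if_plus_subset)
    show "convex hull FW + convex_cone hull GW \<subseteq> convex hull F \<nu> + C \<nu>"
      using W that by blast
  qed (use FW that assms(2-4) polyhedron_imp_closed in auto)
  then have "convex_cone hull GW \<subseteq> Q"
    using assms(7) by blast
  then have "convex_cone hull GW + Q = Q"
    by (rule convex_cone_plus_absorb[OF assms(6) _ convex_cone_hull_contains_0])
  then have "?W + Q = convex hull FW + Q"
    unfolding W by (simp add: add.assoc)
  then have "convex hull (({a} + Q) \<union> (?W + Q)) = convex hull (insert a FW) + Q"
    using convex_hull_Un_plus_cone[OF assms(6) FW(2)] by simp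
  then show thesis
    using that FW(1) by blast
qed

section \<open>Solvency cones, liquidation strategies and the recursion for Z\<close>

lemma Kcone_finitely_generated:
  obtains G where "finite G" "Kcone \<pi> t \<omega> = convex_cone hull G"
proof
  let ?G = "range (\<lambda>j. axis j 1) \<union> range (\<lambda>(j, k). \<pi> t \<omega> j k *\<^sub>R axis j 1 - axis k (1::real))"
  show "finite ?G" by simp
  show "Kcone \<pi> t \<omega> = convex_cone hull ?G"
    unfolding Kcone_def by (rule arg_cong[where f = "\<lambda>S. convex_cone hull S"]) auto
qed

lemma convex_cone_Kcone: "convex_cone (Kcone \<pi> t \<omega>)"
  unfolding Kcone_def by (rule convex_cone_convex_cone_hull)

lemma zero_in_Kcone [simp]: "0 \<in> Kcone \<pi> t \<omega>"
  unfolding Kcone_def by (rule convex_cone_hull_contains_0)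

lemma nonneg_in_Kcone:
  fixes x :: "real^'d::finite"
  assumes "\<forall>j. 0 \<le> x $ j"
  shows "x \<in> Kcone \<pi> t \<omega>"
proof -
  have "x $ j *\<^sub>R axis j 1 \<in> Kcone \<pi> t \<omega>" for j
    using assms convex_cone_Kcone unfolding Kcone_def
    by (intro convex_cone_hull_mul hull_inc) auto
  then have "(\<Sum>j\<in>UNIV. x $ j *\<^sub>R axis j 1) \<in> Kcone \<pi> t \<omega>"
    by (intro convex_cone_sum[OF convex_cone_Kcone]) auto
  then show ?thesis
    by (metis (no_types) basis_expansion scalar_mult_eq_scaleR)
qed

lemma nodeval_eq:
  assumes "meas A t x" "\<mu> \<in> A t" "\<omega> \<in> \<mu>"
  shows "nodeval x \<mu> = x \<omega>"
proof -
  have "(SOME \<omega>. \<omega> \<in> \<mu>) \<in> \<mu>" using assms(3) by (rule someI)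
  then show ?thesis
    using assms unfolding nodeval_def meas_def by blast
qed

definition paste :: "'w set set \<Rightarrow> ('w set \<Rightarrow> 'w \<Rightarrow> 'b::zero) \<Rightarrow> 'w \<Rightarrow> 'b" where
  "paste B f \<omega> = (if \<exists>\<nu>\<in>B. \<omega> \<in> \<nu> then f (SOME \<nu>. \<nu> \<in> B \<and> \<omega> \<in> \<nu>) \<omega> else 0)"

lemma paste_outside: "\<forall>\<nu>\<in>B. \<omega> \<notin> \<nu> \<Longrightarrow> paste B f \<omega> = 0"
  unfolding paste_def by simp

lemma paste_diff:
  fixes f g :: "'w set \<Rightarrow> 'w \<Rightarrow> 'b::ab_group_add"
  shows "(\<lambda>\<omega>. paste B f \<omega> - paste B g \<omega>) = paste B (\<lambda>\<nu> \<omega>. f \<nu> \<omega> - g \<nu> \<omega>)"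
  unfolding paste_def by auto

definition liquidates :: "'w set \<Rightarrow> (nat \<Rightarrow> 'w set set) \<Rightarrow> (nat \<Rightarrow> 'w \<Rightarrow> 'd::finite \<Rightarrow> 'd \<Rightarrow> real)
    \<Rightarrow> nat \<Rightarrow> nat \<Rightarrow> ('w \<Rightarrow> real^'d) \<Rightarrow> (nat \<Rightarrow> 'w \<Rightarrow> real^'d) \<Rightarrow> bool" where
  "liquidates \<Omega> A \<pi> T t z y \<longleftrightarrow>
     (\<forall>s\<in>{Suc t..Suc T}. meas A (s - 1) (y s)) \<and>
     (\<forall>\<omega>\<in>\<Omega>. y (Suc T) \<omega> = 0) \<and>
     (\<lambda>\<omega>. z \<omega> - y (Suc t) \<omega>) \<in> Kset \<Omega> A \<pi> t \<and>
     (\<forall>s\<in>{Suc t..T}. (\<lambda>\<omega>. y s \<omega> - y (Suc s) \<omega>) \<in> Kset \<Omega> A \<pi> s)"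

lemma Qset_iff: "z \<in> Qset \<Omega> A \<pi> T t \<longleftrightarrow> meas A t z \<and> (\<exists>y. liquidates \<Omega> A \<pi> T t z y)"
  unfolding Qset_def liquidates_def by blast

lemma Qset_last: "Qset \<Omega> A \<pi> T T = Kset \<Omega> A \<pi> T"
proof (intro equalityI subsetI)
  fix z assume "z \<in> Qset \<Omega> A \<pi> T T"
  then obtain y where "meas A T z" "\<forall>\<omega>\<in>\<Omega>. y (Suc T) \<omega> = 0"
    "(\<lambda>\<omega>. z \<omega> - y (Suc T) \<omega>) \<in> Kset \<Omega> A \<pi> T"
    unfolding Qset_iff liquidates_def by blast
  then show "z \<in> Kset \<Omega> A \<pi> T"
    unfolding Kset_def by auto
next
  fix z assume "z \<in> Kset \<Omega> A \<pi> T"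
  then have "liquidates \<Omega> A \<pi> T T z (\<lambda>_ _. 0)"
    by (auto simp: liquidates_def meas_def)
  then show "z \<in> Qset \<Omega> A \<pi> T T"
    using \<open>z \<in> Kset \<Omega> A \<pi> T\<close> unfolding Qset_iff Kset_def by blast
qed

lemma liquidates_Suc:
  assumes "t < T" "liquidates \<Omega> A \<pi> T t z y"
  shows "liquidates \<Omega> A \<pi> T (Suc t) (y (Suc t)) y"
  using assms unfolding liquidates_def by auto

lemma liquidates_cons:
  assumes "t < T" "liquidates \<Omega> A \<pi> T (Suc t) y' y" "meas A t y'"
    and "(\<lambda>\<omega>. z \<omega> - y' \<omega>) \<in> Kset \<Omega> A \<pi> t"
  shows "liquidates \<Omega> A \<pi> T t z (y(Suc t := y'))"
  using assms unfolding liquidates_def by (auto simp: le_Suc_eq)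

lemma nodeval_indicator: "\<omega> \<in> \<mu> \<Longrightarrow> nodeval (\<lambda>\<omega>'. if \<omega>' \<in> \<mu> then c else d) \<mu> = c"
  unfolding nodeval_def by (metis someI)

lemma Zbd_last: "Zbd \<Omega> A \<pi> T \<xi> T \<mu> = Ubd \<Omega> A \<pi> T \<xi> T \<mu>"
  by (simp add: Zbd_def)

lemma Zbd_step:
  assumes "t < T"
  shows "Zbd \<Omega> A \<pi> T \<xi> t \<mu> = convex hull (Ubd \<Omega> A \<pi> T \<xi> t \<mu> \<union>
    ((\<Inter>\<nu>\<in>succ A t \<mu>. Zbd \<Omega> A \<pi> T \<xi> (Suc t) \<nu>) + Qnode \<Omega> A \<pi> T t \<mu>))"
proof -
  have "T - t = Suc (T - Suc t)" using assms by simp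
  then show ?thesis
    unfolding Zbd_def by (simp only: Zaux.simps Let_def set_plus_eq_Collect)
qed

lemma Ubd_eq: "Ubd \<Omega> A \<pi> T \<xi> t \<mu> = {- nodeval (\<xi> t) \<mu>} + Qnode \<Omega> A \<pi> T t \<mu>"
  unfolding Ubd_def by (auto simp: set_plus_def)

section \<open>The filtration and the backward recursion\<close>

locale filtered_market =
  fixes \<Omega> :: "'w set" and A :: "nat \<Rightarrow> 'w set set" and T :: nat
    and \<pi> :: "nat \<Rightarrow> 'w \<Rightarrow> 'd::finite \<Rightarrow> 'd \<Rightarrow> real"
  assumes filt: "finite_filtration \<Omega> A T"
    and rates_meas: "\<forall>t\<le>T. meas A t (\<pi> t)"
begin

lemma finite_Omega: "finite \<Omega>"
  using filt by (simp add: finite_filtration_def)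

lemma atom_nonempty: "t \<le> T \<Longrightarrow> \<mu> \<in> A t \<Longrightarrow> \<mu> \<noteq> {}"
  using filt by (simp add: finite_filtration_def is_partition_def)

lemma atom_subset: "t \<le> T \<Longrightarrow> \<mu> \<in> A t \<Longrightarrow> \<mu> \<subseteq> \<Omega>"
  using filt by (simp add: finite_filtration_def is_partition_def)

lemma atom_exists: "t \<le> T \<Longrightarrow> \<omega> \<in> \<Omega> \<Longrightarrow> \<exists>\<mu>\<in>A t. \<omega> \<in> \<mu>"
  using filt by (auto simp: finite_filtration_def is_partition_def)

lemma atom_unique:
  assumes "t \<le> T" "\<mu> \<in> A t" "\<nu> \<in> A t" "\<omega> \<in> \<mu>" "\<omega> \<in> \<nu>"
  shows "\<mu> = \<nu>"
proof -
  have "\<forall>\<mu>\<in>A t. \<forall>\<nu>\<in>A t. \<mu> \<noteq> \<nu> \<longrightarrow> \<mu> \<inter> \<nu> = {}"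
    using filt assms(1) by (simp add: finite_filtration_def is_partition_def)
  then show ?thesis
    using assms(2-5) by blast
qed

lemma atom_parent: "t < T \<Longrightarrow> \<nu> \<in> A (Suc t) \<Longrightarrow> \<exists>\<mu>\<in>A t. \<nu> \<subseteq> \<mu>"
  using filt by (simp add: finite_filtration_def)

lemma atom_refines: "s \<le> r \<Longrightarrow> r \<le> T \<Longrightarrow> \<alpha> \<in> A r \<Longrightarrow> \<exists>\<beta>\<in>A s. \<alpha> \<subseteq> \<beta>"
proof (induction r arbitrary: \<alpha> rule: dec_induct)
  case (step r)
  obtain \<mu> where "\<mu> \<in> A r" "\<alpha> \<subseteq> \<mu>"
    using atom_parent[of r \<alpha>] step.prems by auto
  moreover obtain \<beta> where "\<beta> \<in> A s" "\<mu> \<subseteq> \<beta>"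
    using step.IH[OF _ \<open>\<mu> \<in> A r\<close>] step.prems by auto
  ultimately show ?case by blast
qed blast

lemma meas_mono:
  assumes "meas A s x" "s \<le> r" "r \<le> T"
  shows "meas A r x"
  unfolding meas_def
proof (intro ballI)
  fix \<alpha> \<omega> \<omega>' assume "\<alpha> \<in> A r" "\<omega> \<in> \<alpha>" "\<omega>' \<in> \<alpha>"
  moreover obtain \<beta> where "\<beta> \<in> A s" "\<alpha> \<subseteq> \<beta>"
    using atom_refines[OF assms(2,3) \<open>\<alpha> \<in> A r\<close>] by blast
  ultimately show "x \<omega> = x \<omega>'"
    using assms(1) unfolding meas_def by blast
qed

lemma meas_indicator:
  assumes "t \<le> T" "\<mu> \<in> A t"
  shows "meas A t (\<lambda>\<omega>. if \<omega> \<in> \<mu> then c else d)"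
  unfolding meas_def
proof (intro ballI)
  fix \<alpha> \<omega> \<omega>' assume "\<alpha> \<in> A t" "\<omega> \<in> \<alpha>" "\<omega>' \<in> \<alpha>"
  then have "\<omega> \<in> \<mu> \<longleftrightarrow> \<omega>' \<in> \<mu>"
    using atom_unique[OF assms(1) \<open>\<alpha> \<in> A t\<close> assms(2)] by blast
  then show "(if \<omega> \<in> \<mu> then c else d) = (if \<omega>' \<in> \<mu> then c else d)"
    by simp
qed

lemma Kcone_eq_on_atom:
  "t \<le> T \<Longrightarrow> \<mu> \<in> A t \<Longrightarrow> \<omega> \<in> \<mu> \<Longrightarrow> \<omega>' \<in> \<mu> \<Longrightarrow> Kcone \<pi> t \<omega>' = Kcone \<pi> t \<omega>"
proof -
  assume "t \<le> T" "\<mu> \<in> A t" "\<omega> \<in> \<mu>" "\<omega>' \<in> \<mu>"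
  then have "\<pi> t \<omega>' = \<pi> t \<omega>"
    using rates_meas unfolding meas_def by blast
  then show ?thesis
    unfolding Kcone_def by simp
qed

lemma indicator_in_Kset:
  assumes "t \<le> T" "\<mu> \<in> A t" "\<omega> \<in> \<mu>" "k \<in> Kcone \<pi> t \<omega>"
  shows "(\<lambda>\<omega>'. if \<omega>' \<in> \<mu> then k else 0) \<in> Kset \<Omega> A \<pi> t"
  unfolding Kset_def
proof (intro CollectI conjI ballI meas_indicator[OF assms(1,2)])
  fix \<omega>' assume "\<omega>' \<in> \<Omega>"
  show "(if \<omega>' \<in> \<mu> then k else 0) \<in> Kcone \<pi> t \<omega>'"
    using assms Kcone_eq_on_atom[OF assms(1,2,3), of \<omega>'] by simp
qed

lemma succ_subset: "\<nu> \<in> succ A t \<mu> \<Longrightarrow> \<nu> \<in> A (Suc t) \<and> \<nu> \<subseteq> \<mu>"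
  unfolding succ_def by blast

lemma finite_succ:
  assumes "t < T"
  shows "finite (succ A t \<mu>)"
proof -
  have "succ A t \<mu> \<subseteq> Pow \<Omega>"
    using assms atom_subset[of "Suc t"] unfolding succ_def by auto
  then show ?thesis
    using finite_Omega by (meson finite_Pow_iff finite_subset)
qed

lemma succ_cover:
  assumes "t < T" "\<mu> \<in> A t" "\<omega> \<in> \<mu>"
  obtains \<nu> where "\<nu> \<in> succ A t \<mu>" "\<omega> \<in> \<nu>"
proof -
  have "\<omega> \<in> \<Omega>"
    using assms atom_subset[of t \<mu>] by auto
  then obtain \<nu> where \<nu>: "\<nu> \<in> A (Suc t)" "\<omega> \<in> \<nu>"
    using assms(1) atom_exists[of "Suc t" \<omega>] by (auto simp: Suc_le_eq)
  then obtain \<mu>' where "\<mu>' \<in> A t" "\<nu> \<subseteq> \<mu>'"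
    using atom_parent[OF assms(1)] by blast
  moreover from this have "\<mu>' = \<mu>"
    using atom_unique[of t \<mu>' \<mu> \<omega>] assms(1-3) \<nu>(2) by force
  ultimately have "\<nu> \<subseteq> \<mu>" by simp
  then show thesis
    using that \<nu> by (simp add: succ_def)
qed

lemma paste_eq:
  assumes "s \<le> T" "B \<subseteq> A s" "\<nu> \<in> B" "\<omega> \<in> \<nu>"
  shows "paste B f \<omega> = f \<nu> \<omega>"
proof -
  have "\<exists>\<nu>. \<nu> \<in> B \<and> \<omega> \<in> \<nu>" using assms by blast
  then have "(SOME \<nu>. \<nu> \<in> B \<and> \<omega> \<in> \<nu>) \<in> B \<and> \<omega> \<in> (SOME \<nu>. \<nu> \<in> B \<and> \<omega> \<in> \<nu>)"
    by (rule someI_ex)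
  then have "(SOME \<nu>. \<nu> \<in> B \<and> \<omega> \<in> \<nu>) = \<nu>"
    using atom_unique[OF assms(1)] assms(2-4) by blast
  then show ?thesis
    unfolding paste_def using assms(3,4) by auto
qed

lemma meas_paste:
  assumes "s \<le> r" "r \<le> T" "B \<subseteq> A s" "\<forall>\<nu>\<in>B. meas A r (f \<nu>)"
  shows "meas A r (paste B f)"
  unfolding meas_def
proof (intro ballI)
  fix \<alpha> \<omega> \<omega>' assume \<alpha>: "\<alpha> \<in> A r" and \<omega>: "\<omega> \<in> \<alpha>" "\<omega>' \<in> \<alpha>"
  obtain \<beta> where \<beta>: "\<beta> \<in> A s" "\<alpha> \<subseteq> \<beta>"
    using atom_refines[OF assms(1,2) \<alpha>] by blast
  have sT: "s \<le> T" using assms(1,2) by simp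
  show "paste B f \<omega> = paste B f \<omega>'"
  proof (cases "\<beta> \<in> B")
    case True
    then have "paste B f \<omega> = f \<beta> \<omega>" "paste B f \<omega>' = f \<beta> \<omega>'"
      using paste_eq[OF sT assms(3) True] \<beta>(2) \<omega> by auto
    moreover have "f \<beta> \<omega> = f \<beta> \<omega>'"
      using assms(4) True \<alpha> \<omega> unfolding meas_def by blast
    ultimately show ?thesis by simp
  next
    case False
    have "\<forall>\<nu>\<in>B. x \<notin> \<nu>" if "x \<in> \<alpha>" for x
      using atom_unique[OF sT _ \<beta>(1)] assms(3) False \<beta>(2) that by blast
    then show ?thesis
      using \<omega> by (simp add: paste_outside)
  qed
qed

lemma paste_in_Kset:
  assumes "s \<le> r" "r \<le> T" "B \<subseteq> A s" "\<forall>\<nu>\<in>B. f \<nu> \<in> Kset \<Omega> A \<pi> r"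
  shows "paste B f \<in> Kset \<Omega> A \<pi> r"
  unfolding Kset_def
proof (intro CollectI conjI ballI)
  show "meas A r (paste B f)"
    using assms by (intro meas_paste[OF assms(1-3)]) (simp add: Kset_def)
  fix \<omega> assume "\<omega> \<in> \<Omega>"
  show "paste B f \<omega> \<in> Kcone \<pi> r \<omega>"
  proof (cases "\<exists>\<nu>\<in>B. \<omega> \<in> \<nu>")
    case True
    then obtain \<nu> where "\<nu> \<in> B" "\<omega> \<in> \<nu>" by blast
    moreover from this have "paste B f \<omega> = f \<nu> \<omega>"
      using assms(1-3) by (intro paste_eq) auto
    ultimately show ?thesis
      using assms(4) \<open>\<omega> \<in> \<Omega>\<close> unfolding Kset_def by auto
  qed (simp add: paste_outside)
qed

lemma paste_in_Qset:
  assumes "s \<le> T" "B \<subseteq> A s" "\<forall>\<nu>\<in>B. f \<nu> \<in> Qset \<Omega> A \<pi> T s"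
  shows "paste B f \<in> Qset \<Omega> A \<pi> T s"
proof -
  obtain Y where Y: "\<forall>\<nu>\<in>B. liquidates \<Omega> A \<pi> T s (f \<nu>) (Y \<nu>)"
    using assms(3) unfolding Qset_iff by metis
  define y where "y r = paste B (\<lambda>\<nu>. Y \<nu> r)" for r
  have "meas A s (paste B f)"
    using assms(3) by (intro meas_paste[OF order_refl assms(1,2)]) (simp add: Qset_iff)
  moreover have "liquidates \<Omega> A \<pi> T s (paste B f) y"
    unfolding liquidates_def
  proof (intro conjI ballI)
    fix r assume "r \<in> {Suc s..Suc T}"
    then show "meas A (r - 1) (y r)"
      using Y assms(2) unfolding y_def liquidates_def by (intro meas_paste[of s]) auto
  next
    fix \<omega> assume "\<omega> \<in> \<Omega>"
    show "y (Suc T) \<omega> = 0"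
    proof (cases "\<exists>\<nu>\<in>B. \<omega> \<in> \<nu>")
      case True
      then obtain \<nu> where "\<nu> \<in> B" "\<omega> \<in> \<nu>" by blast
      then have "y (Suc T) \<omega> = Y \<nu> (Suc T) \<omega>"
        unfolding y_def by (rule paste_eq[OF assms(1,2)])
      then show ?thesis
        using Y \<open>\<nu> \<in> B\<close> \<open>\<omega> \<in> \<Omega>\<close> unfolding liquidates_def by simp
    qed (simp add: y_def paste_outside)
  next
    show "(\<lambda>\<omega>. paste B f \<omega> - y (Suc s) \<omega>) \<in> Kset \<Omega> A \<pi> s"
      unfolding y_def paste_diff
      using Y assms(1,2) unfolding liquidates_def by (intro paste_in_Kset) auto
  next
    fix r assume "r \<in> {Suc s..T}"
    then show "(\<lambda>\<omega>. y r \<omega> - y (Suc r) \<omega>) \<in> Kset \<Omega> A \<pi> r"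
      unfolding y_def paste_diff
      using Y assms(2) unfolding liquidates_def by (intro paste_in_Kset[of s]) auto
  qed
  ultimately show ?thesis
    unfolding Qset_iff by blast
qed

lemma Qset_recursion:
  assumes "t < T"
  shows "z \<in> Qset \<Omega> A \<pi> T t \<longleftrightarrow> meas A t z \<and>
    (\<exists>y'. meas A t y' \<and> y' \<in> Qset \<Omega> A \<pi> T (Suc t) \<and> (\<lambda>\<omega>. z \<omega> - y' \<omega>) \<in> Kset \<Omega> A \<pi> t)"
proof
  assume "z \<in> Qset \<Omega> A \<pi> T t"
  then obtain y where z: "meas A t z" and y: "liquidates \<Omega> A \<pi> T t z y"
    unfolding Qset_iff by blast
  have "Suc t \<in> {Suc t..Suc T}"
    using assms by simp
  then have "meas A (Suc t - 1) (y (Suc t))"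
    using y unfolding liquidates_def by blast
  then have "meas A t (y (Suc t))"
    by simp
  moreover from this have "y (Suc t) \<in> Qset \<Omega> A \<pi> T (Suc t)"
    using liquidates_Suc[OF assms y] meas_mono[of t "y (Suc t)" "Suc t"] assms
    unfolding Qset_iff by auto
  moreover have "(\<lambda>\<omega>. z \<omega> - y (Suc t) \<omega>) \<in> Kset \<Omega> A \<pi> t"
    using y unfolding liquidates_def by blast
  ultimately show "meas A t z \<and>
    (\<exists>y'. meas A t y' \<and> y' \<in> Qset \<Omega> A \<pi> T (Suc t) \<and> (\<lambda>\<omega>. z \<omega> - y' \<omega>) \<in> Kset \<Omega> A \<pi> t)"
    using z by blast
next
  assume "meas A t z \<and>
    (\<exists>y'. meas A t y' \<and> y' \<in> Qset \<Omega> A \<pi> T (Suc t) \<and> (\<lambda>\<omega>. z \<omega> - y' \<omega>) \<in> Kset \<Omega> A \<pi> t)"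
  then obtain y' y where "meas A t z" "meas A t y'" "liquidates \<Omega> A \<pi> T (Suc t) y' y"
    "(\<lambda>\<omega>. z \<omega> - y' \<omega>) \<in> Kset \<Omega> A \<pi> t"
    unfolding Qset_iff by blast
  then show "z \<in> Qset \<Omega> A \<pi> T t"
    using liquidates_cons[OF assms] unfolding Qset_iff by blast
qed

lemma Qnode_last:
  assumes "\<mu> \<in> A T" "\<omega> \<in> \<mu>"
  shows "Qnode \<Omega> A \<pi> T T \<mu> = Kcone \<pi> T \<omega>"
proof (intro equalityI subsetI)
  fix q assume "q \<in> Qnode \<Omega> A \<pi> T T \<mu>"
  then obtain z where "z \<in> Kset \<Omega> A \<pi> T" "q = nodeval z \<mu>"
    unfolding Qnode_def Qset_last by blast
  moreover have "\<omega> \<in> \<Omega>"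
    using atom_subset[OF order_refl assms(1)] assms(2) by blast
  ultimately show "q \<in> Kcone \<pi> T \<omega>"
    using nodeval_eq[of A T z \<mu> \<omega>] assms unfolding Kset_def by simp
next
  fix k assume "k \<in> Kcone \<pi> T \<omega>"
  then have "(\<lambda>\<omega>'. if \<omega>' \<in> \<mu> then k else 0) \<in> Qset \<Omega> A \<pi> T T"
    unfolding Qset_last by (rule indicator_in_Kset[OF order_refl assms])
  then show "k \<in> Qnode \<Omega> A \<pi> T T \<mu>"
    unfolding Qnode_def using nodeval_indicator[OF assms(2)] by (metis image_eqI)
qed

lemma nodeval_succ:
  assumes "t < T" "\<nu> \<in> succ A t \<mu>" "\<omega> \<in> \<mu>" "\<mu> \<in> A t" "meas A t y"
  shows "nodeval y \<nu> = y \<omega>"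
proof -
  have \<nu>: "\<nu> \<in> A (Suc t)" "\<nu> \<subseteq> \<mu>"
    using assms(2) by (simp_all add: succ_def)
  have "\<nu> \<noteq> {}"
    using atom_nonempty[of "Suc t" \<nu>] \<nu>(1) assms(1) by simp
  then obtain \<omega>' where \<omega>': "\<omega>' \<in> \<nu>" by blast
  have "meas A (Suc t) y"
    using meas_mono[OF assms(5)] assms(1) by simp
  then have "nodeval y \<nu> = y \<omega>'"
    using \<nu>(1) \<omega>' by (rule nodeval_eq)
  also have "\<dots> = y \<omega>"
    using assms(3-5) \<nu>(2) \<omega>' unfolding meas_def by blast
  finally show ?thesis .
qed

lemma paste_succ_eq_indicator:
  assumes t: "t < T" and \<mu>: "\<mu> \<in> A t"
    and Z: "\<forall>\<nu>\<in>succ A t \<mu>. meas A (Suc t) (Z \<nu>) \<and> nodeval (Z \<nu>) \<nu> = w"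
  shows "paste (succ A t \<mu>) Z = (\<lambda>\<omega>. if \<omega> \<in> \<mu> then w else 0)"
proof
  fix \<omega>
  have B: "succ A t \<mu> \<subseteq> A (Suc t)" and St: "Suc t \<le> T"
    using succ_subset t by auto
  show "paste (succ A t \<mu>) Z \<omega> = (if \<omega> \<in> \<mu> then w else 0)"
  proof (cases "\<omega> \<in> \<mu>")
    case True
    then obtain \<nu> where \<nu>: "\<nu> \<in> succ A t \<mu>" "\<omega> \<in> \<nu>"
      using succ_cover[OF t \<mu>] by blast
    then have "paste (succ A t \<mu>) Z \<omega> = Z \<nu> \<omega>"
      by (rule paste_eq[OF St B])
    also have "\<dots> = w"
      using Z \<nu> B nodeval_eq[where t = "Suc t" and x = "Z \<nu>" and \<mu> = \<nu> and \<omega> = \<omega>] by auto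
    finally show ?thesis using True by simp
  next
    case False
    then have "\<forall>\<nu>\<in>succ A t \<mu>. \<omega> \<notin> \<nu>"
      by (auto simp: succ_def)
    then show ?thesis
      using False by (simp add: paste_outside)
  qed
qed

lemma Qnode_subset_Kcone_plus_Inter_succ:
  assumes t: "t < T" and \<mu>: "\<mu> \<in> A t" and \<omega>: "\<omega> \<in> \<mu>"
  shows "Qnode \<Omega> A \<pi> T t \<mu> \<subseteq> Kcone \<pi> t \<omega> + (\<Inter>\<nu>\<in>succ A t \<mu>. Qnode \<Omega> A \<pi> T (Suc t) \<nu>)"
proof
  fix q assume "q \<in> Qnode \<Omega> A \<pi> T t \<mu>"
  then obtain z where z: "z \<in> Qset \<Omega> A \<pi> T t" and q: "q = nodeval z \<mu>"
    unfolding Qnode_def by blast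
  then obtain y where y: "meas A t y" "y \<in> Qset \<Omega> A \<pi> T (Suc t)"
    and K: "(\<lambda>\<omega>. z \<omega> - y \<omega>) \<in> Kset \<Omega> A \<pi> t"
    unfolding Qset_recursion[OF t] by blast
  have "q = z \<omega>"
    unfolding q using z \<mu> \<omega> unfolding Qset_iff by (intro nodeval_eq) auto
  have "\<omega> \<in> \<Omega>"
    using atom_subset[of t \<mu>] t \<mu> \<omega> by auto
  with K have zK: "z \<omega> - y \<omega> \<in> Kcone \<pi> t \<omega>"
    unfolding Kset_def by blast
  have "y \<omega> \<in> Qnode \<Omega> A \<pi> T (Suc t) \<nu>" if "\<nu> \<in> succ A t \<mu>" for \<nu>
    unfolding Qnode_def using nodeval_succ[OF t that \<omega> \<mu> y(1), symmetric] y(2) by (rule image_eqI)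
  then have "y \<omega> \<in> (\<Inter>\<nu>\<in>succ A t \<mu>. Qnode \<Omega> A \<pi> T (Suc t) \<nu>)"
    by blast
  then have "(z \<omega> - y \<omega>) + y \<omega> \<in> Kcone \<pi> t \<omega> + (\<Inter>\<nu>\<in>succ A t \<mu>. Qnode \<Omega> A \<pi> T (Suc t) \<nu>)"
    by (rule set_plus_intro[OF zK])
  then show "q \<in> Kcone \<pi> t \<omega> + (\<Inter>\<nu>\<in>succ A t \<mu>. Qnode \<Omega> A \<pi> T (Suc t) \<nu>)"
    using \<open>q = z \<omega>\<close> by simp
qed

lemma Kcone_plus_Inter_succ_subset_Qnode:
  assumes t: "t < T" and \<mu>: "\<mu> \<in> A t" and \<omega>: "\<omega> \<in> \<mu>"
  shows "Kcone \<pi> t \<omega> + (\<Inter>\<nu>\<in>succ A t \<mu>. Qnode \<Omega> A \<pi> T (Suc t) \<nu>) \<subseteq> Qnode \<Omega> A \<pi> T t \<mu>"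
proof
  fix q assume "q \<in> Kcone \<pi> t \<omega> + (\<Inter>\<nu>\<in>succ A t \<mu>. Qnode \<Omega> A \<pi> T (Suc t) \<nu>)"
  then obtain k w where q: "q = k + w" and k: "k \<in> Kcone \<pi> t \<omega>"
    and w: "\<forall>\<nu>\<in>succ A t \<mu>. w \<in> Qnode \<Omega> A \<pi> T (Suc t) \<nu>"
    by (rule set_plus_elim) blast
  have "\<forall>\<nu>\<in>succ A t \<mu>. \<exists>z. z \<in> Qset \<Omega> A \<pi> T (Suc t) \<and> nodeval z \<nu> = w"
    using w unfolding Qnode_def by (metis imageE)
  then obtain Z where Z: "\<forall>\<nu>\<in>succ A t \<mu>. Z \<nu> \<in> Qset \<Omega> A \<pi> T (Suc t) \<and> nodeval (Z \<nu>) \<nu> = w"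
    by (rule bchoice[THEN exE])
  let ?y = "paste (succ A t \<mu>) Z"
  have "\<forall>\<nu>\<in>succ A t \<mu>. meas A (Suc t) (Z \<nu>) \<and> nodeval (Z \<nu>) \<nu> = w"
    using Z unfolding Qset_iff by blast
  then have y: "?y = (\<lambda>\<omega>'. if \<omega>' \<in> \<mu> then w else 0)"
    by (rule paste_succ_eq_indicator[OF t \<mu>])
  have "succ A t \<mu> \<subseteq> A (Suc t)" "Suc t \<le> T"
    using succ_subset t by auto
  then have "?y \<in> Qset \<Omega> A \<pi> T (Suc t)"
    using Z by (intro paste_in_Qset) blast+
  moreover have "meas A t ?y"
    unfolding y using t \<mu> by (simp add: meas_indicator)
  moreover have "(\<lambda>\<omega>'. (if \<omega>' \<in> \<mu> then q else 0) - ?y \<omega>') = (\<lambda>\<omega>'. if \<omega>' \<in> \<mu> then k else 0)"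
    unfolding y q by auto
  with t \<mu> \<omega> k have "(\<lambda>\<omega>'. (if \<omega>' \<in> \<mu> then q else 0) - ?y \<omega>') \<in> Kset \<Omega> A \<pi> t"
    by (simp add: indicator_in_Kset)
  moreover have "meas A t (\<lambda>\<omega>'. if \<omega>' \<in> \<mu> then q else 0)"
    using t \<mu> by (simp add: meas_indicator)
  ultimately have "(\<lambda>\<omega>'. if \<omega>' \<in> \<mu> then q else 0) \<in> Qset \<Omega> A \<pi> T t"
    unfolding Qset_recursion[OF t] by blast
  then show "q \<in> Qnode \<Omega> A \<pi> T t \<mu>"
    unfolding Qnode_def using nodeval_indicator[OF \<omega>] by (metis image_eqI)
qed

lemma Qnode_recursion:
  assumes "t < T" "\<mu> \<in> A t" "\<omega> \<in> \<mu>"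
  shows "Qnode \<Omega> A \<pi> T t \<mu> = Kcone \<pi> t \<omega> + (\<Inter>\<nu>\<in>succ A t \<mu>. Qnode \<Omega> A \<pi> T (Suc t) \<nu>)"
  using Qnode_subset_Kcone_plus_Inter_succ[OF assms] Kcone_plus_Inter_succ_subset_Qnode[OF assms]
  by (rule equalityI)

lemma polyhedral_cone_Qnode:
  assumes "t \<le> T" "\<mu> \<in> A t"
  shows "polyhedron (Qnode \<Omega> A \<pi> T t \<mu>) \<and> convex_cone (Qnode \<Omega> A \<pi> T t \<mu>)"
  using assms
proof (induction t arbitrary: \<mu> rule: inc_induct)
  case base
  obtain \<omega> where "\<omega> \<in> \<mu>" using atom_nonempty[OF order_refl base] by blast
  moreover obtain G where "finite G" "Kcone \<pi> T \<omega> = convex_cone hull G"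
    by (rule Kcone_finitely_generated)
  ultimately show ?case
    using Qnode_last[OF base \<open>\<omega> \<in> \<mu>\<close>]
    by (simp add: polyhedron_convex_cone_hull convex_cone_convex_cone_hull)
next
  case (step t)
  obtain \<omega> where \<omega>: "\<omega> \<in> \<mu>" using atom_nonempty step by (meson all_not_in_conv less_imp_le)
  obtain G where "finite G" "Kcone \<pi> t \<omega> = convex_cone hull G"
    by (rule Kcone_finitely_generated)
  moreover have "polyhedron (Qnode \<Omega> A \<pi> T (Suc t) \<nu>) \<and> convex_cone (Qnode \<Omega> A \<pi> T (Suc t) \<nu>)"
    if "\<nu> \<in> succ A t \<mu>" for \<nu>
    using step.IH succ_subset[OF that] by blast
  ultimately show ?case
    unfolding Qnode_recursion[OF step.hyps(2) step.prems \<omega>]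
    using finite_succ[OF step.hyps(2)]
    by (intro conjI polyhedron_plus_polyhedral_cones convex_cone_set_plus polyhedron_Inter convex_cone_Inter)
      (auto simp: polyhedron_convex_cone_hull convex_cone_convex_cone_hull)
qed

lemma Kcone_subset_Qnode:
  assumes "t \<le> T" "\<mu> \<in> A t" "\<omega> \<in> \<mu>"
  shows "Kcone \<pi> t \<omega> \<subseteq> Qnode \<Omega> A \<pi> T t \<mu>"
proof (cases "t = T")
  case True
  then show ?thesis using Qnode_last[of \<mu> \<omega>] assms by simp
next
  case False
  then have t: "t < T" using assms(1) by simp
  have "0 \<in> Qnode \<Omega> A \<pi> T (Suc t) \<nu>" if "\<nu> \<in> succ A t \<mu>" for \<nu>
    using polyhedral_cone_Qnode[of "Suc t" \<nu>] succ_subset[OF that] t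
    by (simp add: convex_cone_contains_0)
  then have "Kcone \<pi> t \<omega> + {0} \<subseteq> Qnode \<Omega> A \<pi> T t \<mu>"
    unfolding Qnode_recursion[OF t assms(2,3)] by (intro set_plus_mono2) auto
  then show ?thesis by simp
qed

lemma nonneg_in_Qnode:
  assumes "t \<le> T" "\<mu> \<in> A t" "\<forall>j. 0 \<le> x $ j"
  shows "x \<in> Qnode \<Omega> A \<pi> T t \<mu>"
proof -
  obtain \<omega> where "\<omega> \<in> \<mu>" using atom_nonempty[OF assms(1,2)] by blast
  with assms show ?thesis
    by (intro subsetD[OF Kcone_subset_Qnode nonneg_in_Kcone])
qed

lemma Inter_succ_Qnode_subset:
  assumes "t < T" "\<mu> \<in> A t"
  shows "(\<Inter>\<nu>\<in>succ A t \<mu>. Qnode \<Omega> A \<pi> T (Suc t) \<nu>) \<subseteq> Qnode \<Omega> A \<pi> T t \<mu>"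
proof -
  have "\<mu> \<noteq> {}" using atom_nonempty[of t \<mu>] assms by simp
  then obtain \<omega> where "\<omega> \<in> \<mu>" by blast
  then have "{0} + (\<Inter>\<nu>\<in>succ A t \<mu>. Qnode \<Omega> A \<pi> T (Suc t) \<nu>) \<subseteq> Qnode \<Omega> A \<pi> T t \<mu>"
    unfolding Qnode_recursion[OF assms \<open>\<omega> \<in> \<mu>\<close>] by (intro set_plus_mono2) auto
  then show ?thesis by simp
qed

lemma Ubd_subset_Zbd:
  assumes "t \<le> T"
  shows "Ubd \<Omega> A \<pi> T \<xi> t \<mu> \<subseteq> Zbd \<Omega> A \<pi> T \<xi> t \<mu>"
proof (cases "t = T")
  case True
  then show ?thesis by (simp add: Zbd_last)
next
  case False
  then have "t < T" using assms by simp
  show ?thesis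
    unfolding Zbd_step[OF \<open>t < T\<close>] by (rule subset_trans[OF Un_upper1 hull_subset])
qed

text \<open>The vector with entries \<Sum>_\<nu> |\<xi>_t+1(\<nu>) $ j| dominates every -\<xi>_t+1(\<nu>), so it lies in
  every U_t+1(\<nu>) \<subseteq> Z_t+1(\<nu>).\<close>

lemma Inter_succ_Zbd_nonempty:
  assumes "t < T"
  shows "(\<Inter>\<nu>\<in>succ A t \<mu>. Zbd \<Omega> A \<pi> T \<xi> (Suc t) \<nu>) \<noteq> {}"
proof -
  let ?S = "succ A t \<mu>" and ?\<xi> = "\<lambda>\<nu>. nodeval (\<xi> (Suc t)) \<nu>"
  define x :: "real^'d" where "x = (\<chi> j. \<Sum>\<nu>\<in>?S. \<bar>?\<xi> \<nu> $ j\<bar>)"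
  have "x \<in> Zbd \<Omega> A \<pi> T \<xi> (Suc t) \<nu>" if \<nu>: "\<nu> \<in> ?S" for \<nu>
  proof -
    have "\<bar>?\<xi> \<nu> $ j\<bar> \<le> (\<Sum>\<nu>'\<in>?S. \<bar>?\<xi> \<nu>' $ j\<bar>)" for j
      using finite_succ[OF assms] \<nu> by (intro member_le_sum) auto
    moreover have "(x + ?\<xi> \<nu>) $ j = (\<Sum>\<nu>'\<in>?S. \<bar>?\<xi> \<nu>' $ j\<bar>) + ?\<xi> \<nu> $ j" for j
      by (simp add: x_def)
    moreover have "- (?\<xi> \<nu> $ j) \<le> \<bar>?\<xi> \<nu> $ j\<bar>" for j
      by (rule abs_ge_minus_self)
    ultimately have "\<forall>j. 0 \<le> (x + ?\<xi> \<nu>) $ j"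
      by (smt (verit))
    then have "x + ?\<xi> \<nu> \<in> Qnode \<Omega> A \<pi> T (Suc t) \<nu>"
      using assms succ_subset[OF \<nu>] by (intro nonneg_in_Qnode) auto
    then have "- ?\<xi> \<nu> + (x + ?\<xi> \<nu>) \<in> Ubd \<Omega> A \<pi> T \<xi> (Suc t) \<nu>"
      unfolding Ubd_eq by (intro set_plus_intro) simp_all
    then show ?thesis
      using Ubd_subset_Zbd[of "Suc t" \<xi> \<nu>] assms by auto
  qed
  then show ?thesis by blast
qed

lemma Zbd_step_representation:
  assumes t: "t < T" and \<mu>: "\<mu> \<in> A t"
    and F: "\<forall>\<nu>\<in>succ A t \<mu>. finite (F \<nu>) \<and>
      Zbd \<Omega> A \<pi> T \<xi> (Suc t) \<nu> = convex hull F \<nu> + Qnode \<Omega> A \<pi> T (Suc t) \<nu>"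
  obtains F' where "finite F'" "F' \<noteq> {}"
    "Zbd \<Omega> A \<pi> T \<xi> t \<mu> = convex hull F' + Qnode \<Omega> A \<pi> T t \<mu>"
proof -
  let ?S = "succ A t \<mu>" and ?Q = "\<lambda>\<nu>. Qnode \<Omega> A \<pi> T (Suc t) \<nu>"
  have W: "(\<Inter>\<nu>\<in>?S. Zbd \<Omega> A \<pi> T \<xi> (Suc t) \<nu>) = (\<Inter>\<nu>\<in>?S. convex hull F \<nu> + ?Q \<nu>)"
    using F by simp
  obtain F' where F': "finite F'" "F' \<noteq> {}" and hull: "convex hull (({- nodeval (\<xi> t) \<mu>} + Qnode \<Omega> A \<pi> T t \<mu>)
      \<union> ((\<Inter>\<nu>\<in>?S. convex hull F \<nu> + ?Q \<nu>) + Qnode \<Omega> A \<pi> T t \<mu>)) = convex hull F' + Qnode \<Omega> A \<pi> T t \<mu>"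
  proof (rule convex_hull_Un_Inter_plus_cone)
    show "finite ?S" by (rule finite_succ[OF t])
    show "(\<Inter>\<nu>\<in>?S. convex hull F \<nu> + ?Q \<nu>) \<noteq> {}"
      using Inter_succ_Zbd_nonempty[OF t, where \<mu> = \<mu> and \<xi> = \<xi>] W by simp
    show "convex_cone (Qnode \<Omega> A \<pi> T t \<mu>)"
      using polyhedral_cone_Qnode t \<mu> by simp
    show "(\<Inter>\<nu>\<in>?S. ?Q \<nu>) \<subseteq> Qnode \<Omega> A \<pi> T t \<mu>"
      by (rule Inter_succ_Qnode_subset[OF t \<mu>])
    fix \<nu> assume "\<nu> \<in> ?S"
    then show "finite (F \<nu>)"
      using F by blast
    have "polyhedron (?Q \<nu>) \<and> convex_cone (?Q \<nu>)"
      using polyhedral_cone_Qnode[of "Suc t" \<nu>] succ_subset[OF \<open>\<nu> \<in> ?S\<close>] t by simp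
    then show "polyhedron (?Q \<nu>)" "convex_cone (?Q \<nu>)"
      by simp_all
  qed
  have "Zbd \<Omega> A \<pi> T \<xi> t \<mu> = convex hull F' + Qnode \<Omega> A \<pi> T t \<mu>"
    unfolding Zbd_step[OF t] W Ubd_eq hull by (rule refl)
  then show thesis
    using that F' by blast
qed

lemma Zbd_eq_convex_hull_plus_Qnode:
  assumes "t \<le> T" "\<mu> \<in> A t"
  obtains F where "finite F" "F \<noteq> {}" "Zbd \<Omega> A \<pi> T \<xi> t \<mu> = convex hull F + Qnode \<Omega> A \<pi> T t \<mu>"
proof -
  have "\<exists>F. finite F \<and> F \<noteq> {} \<and> Zbd \<Omega> A \<pi> T \<xi> t \<mu> = convex hull F + Qnode \<Omega> A \<pi> T t \<mu>"
    using assms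
  proof (induction t arbitrary: \<mu> rule: inc_induct)
    case base
    show ?case
      by (intro exI[of _ "{- nodeval (\<xi> T) \<mu>}"]) (simp add: Zbd_last Ubd_eq)
  next
    case (step t)
    have "\<forall>\<nu>\<in>succ A t \<mu>. \<exists>F. finite F \<and> F \<noteq> {} \<and>
        Zbd \<Omega> A \<pi> T \<xi> (Suc t) \<nu> = convex hull F + Qnode \<Omega> A \<pi> T (Suc t) \<nu>"
      using step.IH succ_subset by blast
    then obtain F where F: "\<forall>\<nu>\<in>succ A t \<mu>. finite (F \<nu>) \<and> F \<nu> \<noteq> {} \<and>
        Zbd \<Omega> A \<pi> T \<xi> (Suc t) \<nu> = convex hull F \<nu> + Qnode \<Omega> A \<pi> T (Suc t) \<nu>"
      by (rule bchoice[THEN exE])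
    then have "\<forall>\<nu>\<in>succ A t \<mu>. finite (F \<nu>) \<and>
        Zbd \<Omega> A \<pi> T \<xi> (Suc t) \<nu> = convex hull F \<nu> + Qnode \<Omega> A \<pi> T (Suc t) \<nu>"
      by blast
    then obtain F' where "finite F'" "F' \<noteq> {}"
      "Zbd \<Omega> A \<pi> T \<xi> t \<mu> = convex hull F' + Qnode \<Omega> A \<pi> T t \<mu>"
      by (rule Zbd_step_representation[OF step.hyps(2) step.prems])
    then show ?case by blast
  qed
  then show thesis using that by blast
qed

end

theorem proposition5p2:
  fixes \<Omega> :: "'w set" and A :: "nat \<Rightarrow> 'w set set" and T :: nat
    and P :: "'w \<Rightarrow> real"
    and \<pi> :: "nat \<Rightarrow> 'w \<Rightarrow> 'd::finite \<Rightarrow> 'd \<Rightarrow> real"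
    and \<xi> :: "nat \<Rightarrow> 'w \<Rightarrow> real^'d"
  assumes filt: "finite_filtration \<Omega> A T"
    and prob: "\<forall>\<omega>\<in>\<Omega>. P \<omega> > 0" "(\<Sum>\<omega>\<in>\<Omega>. P \<omega>) = 1"
    and rates_meas: "\<forall>t\<le>T. meas A t (\<pi> t)"
    and rates_pos: "\<forall>t\<le>T. \<forall>\<omega>\<in>\<Omega>. \<forall>j k. \<pi> t \<omega> j k > 0"
    and rates_diag: "\<forall>t\<le>T. \<forall>\<omega>\<in>\<Omega>. \<forall>j. \<pi> t \<omega> j j = 1"
    and NA: "no_arbitrage \<Omega> A \<pi> T"
    and adapted: "\<forall>t\<le>T. meas A t (\<xi> t)"
    and t: "t \<le> T" and mu: "\<mu> \<in> A t"
  shows "Zbd \<Omega> A \<pi> T \<xi> t \<mu> \<noteq> {} \<and> convex (Zbd \<Omega> A \<pi> T \<xi> t \<mu>)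
    \<and> polyhedron (Zbd \<Omega> A \<pi> T \<xi> t \<mu>)
    \<and> recession_cone (Zbd \<Omega> A \<pi> T \<xi> t \<mu>) = Qnode \<Omega> A \<pi> T t \<mu>"
proof -
  interpret filtered_market \<Omega> A T \<pi>
    using filt rates_meas by unfold_locales
  obtain F where F: "finite F" "F \<noteq> {}"
    and Z: "Zbd \<Omega> A \<pi> T \<xi> t \<mu> = convex hull F + Qnode \<Omega> A \<pi> T t \<mu>"
    using Zbd_eq_convex_hull_plus_Qnode[OF t mu] .
  have Q: "polyhedron (Qnode \<Omega> A \<pi> T t \<mu>)" "convex_cone (Qnode \<Omega> A \<pi> T t \<mu>)"
    using polyhedral_cone_Qnode[OF t mu] by auto
  obtain f where "f \<in> F" using F(2) by blast
  then have "f + 0 \<in> Zbd \<Omega> A \<pi> T \<xi> t \<mu>"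
    unfolding Z using convex_cone_contains_0[OF Q(2)] by (intro set_plus_intro hull_inc)
  then have "Zbd \<Omega> A \<pi> T \<xi> t \<mu> \<noteq> {}" by blast
  moreover have "convex (Zbd \<Omega> A \<pi> T \<xi> t \<mu>)"
    using Q(2) unfolding Z by (simp add: convex_set_plus convex_cone_def)
  moreover have "polyhedron (Zbd \<Omega> A \<pi> T \<xi> t \<mu>)"
    unfolding Z by (rule polyhedron_convex_hull_plus_polyhedral_cone[OF F(1) Q])
  moreover have "recession_cone (Zbd \<Omega> A \<pi> T \<xi> t \<mu>) = Qnode \<Omega> A \<pi> T t \<mu>"
    unfolding Z using F Q polyhedron_imp_closed by (intro recession_cone_convex_hull_plus_cone) auto
  ultimately show ?thesis by blast
qed

end
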